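(* Let $p$ be the density of the centred Gaussian $\mathcal N(0,\Sigma)$ on $\mathbb{R}^d$ with $\Sigma$ positive definite. Let $\tau>0$, $y\in\mathbb{R}^d$, and define $x_0=y$ and $x_{k+1}=\alpha_k\,\mathrm{MMSE}_{\sigma_k}(x_k)+(1-\alpha_k)y$ with $\alpha_k=\frac{k+1}{k+2}$, $\sigma_k^2=\frac{\tau}{k+1}$. Then for all $k\ge0$, $$x_k-\mathrm{prox}_{-\tau\ln p}(y)=\frac{y-\mathrm{prox}_{-\tau\ln p}(y)}{k+1}.$$
   Context: For $\sigma>0$, $\mathrm{MMSE}_\sigma(z):=\mathbb{E}[X\mid X+\sigma\varepsilon=z]$ where $X\sim p$ and $\varepsilon\sim\mathcal N(0,I_d)$ are independent. $\mathrm{prox}_{-\tau\ln p}(y):=\arg\min_x\{\tfrac12\|y-x\|^2-\tau\ln p(x)\}$, which here equals $(I+\tau\Sigma^{-1})^{-1}y$. *)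

theory Defs
  imports "HOL-Analysis.Analysis"
begin

definition pos_def :: "real^'n^'n \<Rightarrow> bool" where
  "pos_def S \<longleftrightarrow> transpose S = S \<and> (\<forall>v. v \<noteq> 0 \<longrightarrow> v \<bullet> (S *v v) > 0)"

definition gauss_density :: "real^'n^'n \<Rightarrow> real^'n \<Rightarrow> real" where
  "gauss_density S x =
     exp (- (x \<bullet> (matrix_inv S *v x)) / 2)
     / sqrt ((2 * pi) ^ CARD('n) * det S)"

definition noise_density :: "real \<Rightarrow> real^'n \<Rightarrow> real" where
  "noise_density sg w =
     exp (- (norm w ^ 2 / (2 * sg ^ 2))) / sqrt ((2 * pi * sg ^ 2) ^ CARD('n))"

text \<open>MMSE denoiser E[X | X + sigma eps = z] for X with density p, given by the
  Bayes formula (posterior mean).\<close>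
definition MMSE :: "(real^'n \<Rightarrow> real) \<Rightarrow> real \<Rightarrow> real^'n \<Rightarrow> real^'n" where
  "MMSE p sg z =
     (1 / (\<integral>x. p x * noise_density sg (z - x) \<partial>lborel)) *\<^sub>R
     (\<integral>x. (p x * noise_density sg (z - x)) *\<^sub>R x \<partial>lborel)"

definition prox_neg_log :: "real \<Rightarrow> (real^'n \<Rightarrow> real) \<Rightarrow> real^'n \<Rightarrow> real^'n" where
  "prox_neg_log \<tau> p y =
     (THE x. \<forall>x'. (norm (y - x))^2 / 2 - \<tau> * ln (p x) \<le> (norm (y - x'))^2 / 2 - \<tau> * ln (p x'))"

end

(* With Q the inverse of Sigma, both maps in the iteration are resolvents of Q.  The prox objective
   |y - x|^2/2 + tau x.Qx/2 + const is a strictly convex quadratic, minimised at the unique P with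
   P + tau Q P = y.  Completing the square shows that the posterior weight p(x) n_sigma(z - x) at
   z = m + sigma^2 Q m is a positive multiple of a Gaussian bump centred at m; the bump is even about m,
   so the posterior mean is m.  Hence if x_k = P + (tau/(k+1)) Q P, then P is the MMSE of x_k at the
   noise level sigma_k^2 = tau/(k+1), and the averaging step gives x_(k+1) = P + (tau/(k+2)) Q P. *)

theory Submission
  imports Defs "HOL-Probability.Probability"
begin

lemma det_nonzero_if_quadratic_form_pos:
  fixes A :: "real^'n^'n"
  assumes "\<And>v. v \<noteq> 0 \<Longrightarrow> 0 < v \<bullet> (A *v v)"
  shows "det A \<noteq> 0"
proof -
  have "inj ((*v) A)"
  proof (rule injI)
    fix u v assume "A *v u = A *v v"
    then have "(u - v) \<bullet> (A *v (u - v)) = 0"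
      by (simp add: matrix_vector_mult_diff_distrib)
    then show "u = v" using assms[of "u - v"] by auto
  qed
  then show ?thesis
    using det_nz_iff_inj[of "(*v) A"] by (simp add: matrix_of_matrix_vector_mul)
qed

lemma det_pos_if_quadratic_form_pos:
  fixes A :: "real^'n^'n"
  assumes pos: "\<And>v. v \<noteq> 0 \<Longrightarrow> 0 < v \<bullet> (A *v v)"
  shows "0 < det A"
proof (rule ccontr)
  assume "\<not> 0 < det A"
  define M where "M t = t *\<^sub>R A + (1 - t) *\<^sub>R mat 1" for t :: real
  have "continuous_on {0..1} (\<lambda>t. det (M t))"
    unfolding det_def M_def by (intro continuous_intros)
  then obtain t where t: "0 \<le> t" "t \<le> 1" "det (M t) = 0"
    using IVT2'[of "\<lambda>t. det (M t)" 1 0 0] \<open>\<not> 0 < det A\<close> by (auto simp: M_def)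
  \<comment> \<open>yet no matrix on the segment from \<open>mat 1\<close> to \<open>A\<close> is singular\<close>
  have "det (M t) \<noteq> 0"
  proof (rule det_nonzero_if_quadratic_form_pos)
    fix v :: "real^'n" assume "v \<noteq> 0"
    then have "0 < v \<bullet> (A *v v)" "0 < v \<bullet> v" using pos by auto
    moreover have "v \<bullet> (M t *v v) = t * (v \<bullet> (A *v v)) + (1 - t) * (v \<bullet> v)"
      by (simp add: M_def matrix_vector_mult_add_rdistrib scaleR_matrix_vector_assoc[symmetric]
          inner_add_right)
    ultimately show "0 < v \<bullet> (M t *v v)"
      using t by (smt (verit) mult_nonneg_nonneg mult_pos_pos)
  qed
  with t show False by simp
qed

lemma pos_def_det_pos: "pos_def S \<Longrightarrow> 0 < det S"
  unfolding pos_def_def by (intro det_pos_if_quadratic_form_pos) auto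

lemma pos_def_quadratic_form_nonneg: "pos_def Q \<Longrightarrow> 0 \<le> u \<bullet> (Q *v u)"
  unfolding pos_def_def by (cases "u = 0") (auto intro: less_imp_le)

lemma pos_def_matrix_inv:
  fixes S :: "real^'n^'n"
  assumes "pos_def S"
  shows "pos_def (matrix_inv S)"
proof -
  have pos: "\<And>v. v \<noteq> 0 \<Longrightarrow> 0 < v \<bullet> (S *v v)" and sym: "transpose S = S"
    using assms unfolding pos_def_def by auto
  have "invertible S"
    using pos_def_det_pos[OF assms] by (simp add: invertible_det_nz)
  then have SQ: "S ** matrix_inv S = mat 1"
    unfolding invertible_def matrix_inv_def by (rule someI2_ex) auto
  have "transpose (matrix_inv S) = transpose (matrix_inv S) ** (S ** matrix_inv S)"
    by (simp add: SQ)
  also have "\<dots> = transpose (S ** matrix_inv S) ** matrix_inv S"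
    by (simp add: matrix_mul_assoc matrix_transpose_mul sym)
  also have "\<dots> = matrix_inv S"
    by (simp add: SQ transpose_mat)
  finally have "transpose (matrix_inv S) = matrix_inv S" .
  moreover have "0 < v \<bullet> (matrix_inv S *v v)" if "v \<noteq> 0" for v
  proof -
    define w where "w = matrix_inv S *v v"
    have Sw: "S *v w = v" by (simp add: w_def matrix_vector_mul_assoc SQ)
    then have "w \<noteq> 0" using that by auto
    have "v \<bullet> (matrix_inv S *v v) = (S *v w) \<bullet> w"
      by (simp add: w_def matrix_vector_mul_assoc SQ)
    then show ?thesis using pos[of w] \<open>w \<noteq> 0\<close> by (simp add: inner_commute)
  qed
  ultimately show ?thesis unfolding pos_def_def by blast
qed

lemma inner_matrix_vector_mult_sym:
  fixes Q :: "real^'n^'n"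
  assumes "transpose Q = Q"
  shows "x \<bullet> (Q *v y) = (Q *v x) \<bullet> y"
  by (metis assms dot_lmul_matrix transpose_matrix_vector)

lemma id_plus_pos_def_surj:
  fixes Q :: "real^'n^'n"
  assumes "pos_def Q" and "0 \<le> t"
  obtains m where "m + t *\<^sub>R (Q *v m) = z"
proof -
  define M where "M = mat 1 + t *\<^sub>R Q"
  have Mv: "M *v v = v + t *\<^sub>R (Q *v v)" for v
    by (simp add: M_def matrix_vector_mult_add_rdistrib scaleR_matrix_vector_assoc[symmetric])
  have "det M \<noteq> 0"
  proof (rule det_nonzero_if_quadratic_form_pos)
    fix v :: "real^'n" assume "v \<noteq> 0"
    then have "0 < v \<bullet> v" "0 \<le> v \<bullet> (Q *v v)"
      using pos_def_quadratic_form_nonneg[OF assms(1)] by auto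
    then show "0 < v \<bullet> (M *v v)"
      using assms(2) by (simp add: Mv inner_add_right add_pos_nonneg)
  qed
  then have "bij ((*v) M)"
    by (simp add: invertible_det_nz flip: invertible_eq_bij)
  then obtain m where "M *v m = z" by (metis bij_pointE)
  then show ?thesis using that by (simp add: Mv)
qed

lemma integrable_prod_inner_Basis:
  fixes h :: "real \<Rightarrow> real"
  assumes h: "integrable lborel h" and nonneg: "\<And>t. 0 \<le> h t"
  shows "integrable lborel (\<lambda>u::'a::euclidean_space. \<Prod>b\<in>Basis. h (u \<bullet> b))"
proof (rule integrableI_nonneg)
  have [measurable]: "h \<in> borel_measurable borel"
    using borel_measurable_integrable[OF h] by simp
  show "(\<lambda>u::'a. \<Prod>b\<in>Basis. h (u \<bullet> b)) \<in> borel_measurable lborel" by measurable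
  show "AE u in lborel. 0 \<le> (\<Prod>b\<in>Basis. h (u \<bullet> b))" by (simp add: prod_nonneg nonneg)
  have "(\<integral>\<^sup>+u. ennreal (\<Prod>b\<in>Basis. h (u \<bullet> b)) \<partial>(lborel::'a measure))
      = (\<integral>\<^sup>+u. (\<Prod>b\<in>Basis. ennreal (h ((u::'a) \<bullet> b))) \<partial>lborel)"
    by (simp add: prod_ennreal nonneg)
  also have "\<dots> = (\<Prod>b\<in>(Basis::'a set). \<integral>\<^sup>+t. ennreal (h t) \<partial>lborel)"
    by (rule nn_integral_lborel_prod) auto
  also have "\<dots> < \<infinity>"
    using h nonneg
    by (simp add: integrable_iff_bounded less_top[symmetric] ennreal_prod_eq_top power_eq_top_ennreal)
  finally show "(\<integral>\<^sup>+u. ennreal (\<Prod>b\<in>Basis. h (u \<bullet> b)) \<partial>(lborel::'a measure)) < \<infinity>" .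
qed

lemma prod_normal_density_inner_Basis:
  fixes u :: "'a::euclidean_space"
  assumes "0 < s"
  shows "(\<Prod>b\<in>Basis. normal_density 0 s (u \<bullet> b))
       = exp (- (norm u ^ 2) / (2 * s^2)) / sqrt (2 * pi * s^2) ^ DIM('a)"
proof -
  have norm_sq: "norm u ^ 2 = (\<Sum>b\<in>Basis. (u \<bullet> b)^2)"
    unfolding power2_norm_eq_inner by (subst euclidean_inner) (simp add: power2_eq_square)
  have "(\<Prod>b\<in>Basis. normal_density 0 s (u \<bullet> b))
      = (\<Prod>b\<in>(Basis::'a set). 1 / sqrt (2 * pi * s^2)) * (\<Prod>b\<in>Basis. exp (- ((u \<bullet> b)^2) / (2 * s^2)))"
    unfolding prod.distrib[symmetric] by (rule prod.cong) (simp_all add: normal_density_def)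
  also have "(\<Prod>b\<in>Basis. exp (- ((u \<bullet> b)^2) / (2 * s^2))) = exp (- (norm u ^ 2) / (2 * s^2))"
    by (simp add: exp_sum[symmetric] norm_sq sum_negf sum_divide_distrib)
  finally show ?thesis by (simp add: power_one_over)
qed

lemma integrable_gaussian_one_plus_norm:
  assumes s: "0 < s"
  shows "integrable lborel (\<lambda>u::'a::euclidean_space. exp (- (norm u ^ 2) / (2 * s^2)) * (1 + norm u))"
proof (rule Bochner_Integration.integrable_bound)
  define C where "C = 2 * sqrt (2 * pi * s^2) ^ DIM('a)"
  define h where "h = (\<lambda>t. normal_density 0 s t * (1 + \<bar>t\<bar>))"
  have "integrable lborel (\<lambda>t. normal_density 0 s t + normal_density 0 s t * \<bar>t - 0\<bar> ^ 1)"
    using s by (intro Bochner_Integration.integrable_add integrable_normal_density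
        integrable_normal_moment_abs)
  then have "integrable lborel h"
    by (simp add: h_def algebra_simps)
  then show "integrable lborel (\<lambda>u::'a. C * (\<Prod>b\<in>Basis. h (u \<bullet> b)))"
    by (intro integrable_mult_right integrable_prod_inner_Basis) (simp_all add: h_def normal_density_nonneg)
  show "(\<lambda>u::'a. exp (- (norm u ^ 2) / (2 * s^2)) * (1 + norm u)) \<in> borel_measurable lborel"
    by measurable
  show "AE u in lborel. norm (exp (- (norm u ^ 2) / (2 * s^2)) * (1 + norm u))
                        \<le> norm (C * (\<Prod>b\<in>Basis. h ((u::'a) \<bullet> b)))"
  proof (intro AE_I2)
    fix u :: 'a
    have "1 \<le> (\<Prod>b\<in>(Basis::'a set). 1 + \<bar>u \<bullet> b\<bar>)"
      by (rule prod_ge_1) simp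
    moreover have "norm u \<le> (\<Prod>b\<in>(Basis::'a set). 1 + \<bar>u \<bullet> b\<bar>)"
      using norm_le_l1[of u] sum_le_prod[of Basis "\<lambda>b. \<bar>u \<bullet> b\<bar>"] by simp
    ultimately have "exp (- (norm u ^ 2) / (2 * s^2)) * (1 + norm u)
        \<le> exp (- (norm u ^ 2) / (2 * s^2)) * (2 * (\<Prod>b\<in>Basis. 1 + \<bar>u \<bullet> b\<bar>))"
      by (intro mult_left_mono) auto
    also have "\<dots> = C * (\<Prod>b\<in>Basis. h (u \<bullet> b))"
      using prod_normal_density_inner_Basis[OF s, of u] s
      by (simp add: C_def h_def prod.distrib)
    finally show "norm (exp (- (norm u ^ 2) / (2 * s^2)) * (1 + norm u))
                  \<le> norm (C * (\<Prod>b\<in>Basis. h (u \<bullet> b)))"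
      by simp
  qed
qed

lemma integrable_if_gaussian_bound:
  fixes G :: "'a::euclidean_space \<Rightarrow> real"
  assumes s: "0 < s" and [measurable]: "G \<in> borel_measurable borel"
    and bound: "\<And>u. \<bar>G u\<bar> \<le> exp (- (norm u ^ 2) / (2 * s^2))"
  shows "integrable lborel G" and "integrable lborel (\<lambda>u. G u *\<^sub>R u)"
proof -
  have "norm (G u) \<le> exp (- (norm u ^ 2) / (2 * s^2)) * (1 + norm u)"
    and "norm (G u *\<^sub>R u) \<le> exp (- (norm u ^ 2) / (2 * s^2)) * (1 + norm u)" for u
  proof -
    have "\<bar>G u\<bar> * 1 \<le> exp (- (norm u ^ 2) / (2 * s^2)) * (1 + norm u)"
      and "\<bar>G u\<bar> * norm u \<le> exp (- (norm u ^ 2) / (2 * s^2)) * (1 + norm u)"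
      using bound[of u] by (intro mult_mono; simp)+
    then show "norm (G u) \<le> exp (- (norm u ^ 2) / (2 * s^2)) * (1 + norm u)"
      and "norm (G u *\<^sub>R u) \<le> exp (- (norm u ^ 2) / (2 * s^2)) * (1 + norm u)"
      by simp_all
  qed
  then show "integrable lborel G" and "integrable lborel (\<lambda>u. G u *\<^sub>R u)"
    by (auto intro!: Bochner_Integration.integrable_bound[OF integrable_gaussian_one_plus_norm[OF s]])
qed

lemma integral_lborel_translate:
  fixes f :: "'a::euclidean_space \<Rightarrow> 'b::{banach,second_countable_topology}"
  assumes "f \<in> borel_measurable borel"
  shows "(\<integral>x. f (c + x) \<partial>lborel) = (\<integral>x. f x \<partial>lborel)"
  using integral_distr[of "(+) c" lborel borel f] assms by (simp add: lborel_distr_plus)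

lemma integral_lborel_odd:
  fixes f :: "'a::euclidean_space \<Rightarrow> 'b::{banach,second_countable_topology}"
  assumes "f \<in> borel_measurable borel" and odd: "\<And>x. f (- x) = - f x"
  shows "(\<integral>x. f x \<partial>lborel) = 0"
proof -
  have "(lborel :: 'a measure) = distr lborel borel uminus"
    using lborel_affine[of "-1" 0] by (simp add: density_1)
  then have "(\<integral>x. f x \<partial>lborel) = (\<integral>x. f (- x) \<partial>lborel)"
    using integral_distr[of uminus lborel borel f] assms(1) by simp
  also have "\<dots> = - (\<integral>x. f x \<partial>lborel)"
    by (simp add: odd)
  finally show ?thesis
    by (metis scaleR_2 scaleR_eq_0_iff eq_neg_iff_add_eq_0 zero_neq_numeral)
qed

lemma integral_lborel_pos:
  fixes f :: "'a::euclidean_space \<Rightarrow> real"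
  assumes f: "integrable lborel f" and pos: "\<And>x. 0 < f x"
  shows "0 < (\<integral>x. f x \<partial>lborel)"
proof -
  have "(\<integral>x. f x \<partial>lborel) \<noteq> 0"
  proof
    assume "(\<integral>x. f x \<partial>lborel) = 0"
    then have "AE x in (lborel :: 'a measure). False"
      using integral_nonneg_eq_0_iff_AE[OF f] pos by (simp add: less_imp_le less_imp_neq[symmetric])
    then show False
      by (subst (asm) AE_iff_measurable[of UNIV]) auto
  qed
  moreover have "0 \<le> (\<integral>x. f x \<partial>lborel)"
    using pos by (simp add: less_imp_le)
  ultimately show ?thesis by simp
qed

lemma MMSE_eq_center_of_symmetric_weight:
  fixes p G :: "real^'n \<Rightarrow> real"
  assumes weight: "\<And>x. p x * noise_density sg (z - x) = K * G (x - m)"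
    and "K \<noteq> 0" and [measurable]: "G \<in> borel_measurable borel"
    and "integrable lborel G" and "integrable lborel (\<lambda>u. G u *\<^sub>R u)"
    and even: "\<And>u. G (- u) = G u" and "(\<integral>u. G u \<partial>lborel) \<noteq> 0"
  shows "MMSE p sg z = m"
proof -
  have odd_moment: "(\<integral>u. G u *\<^sub>R u \<partial>lborel) = 0"
    by (rule integral_lborel_odd) (simp_all add: even)
  have "(\<integral>x. p x * noise_density sg (z - x) \<partial>lborel) = (\<integral>x. K * G (m + x - m) \<partial>lborel)"
    unfolding weight by (rule integral_lborel_translate[symmetric]) simp
  also have "\<dots> = K * (\<integral>u. G u \<partial>lborel)"
    by simp
  finally have mass: "(\<integral>x. p x * noise_density sg (z - x) \<partial>lborel) = K * (\<integral>u. G u \<partial>lborel)" .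
  have "(\<integral>x. (p x * noise_density sg (z - x)) *\<^sub>R x \<partial>lborel)
      = (\<integral>x. (K * G (m + x - m)) *\<^sub>R (m + x) \<partial>lborel)"
    unfolding weight by (rule integral_lborel_translate[symmetric]) simp
  also have "\<dots> = (\<integral>u. (K * G u) *\<^sub>R m + (K * G u) *\<^sub>R u \<partial>lborel)"
    by (simp add: scaleR_add_right)
  also have "\<dots> = (\<integral>u. (K * G u) *\<^sub>R m \<partial>lborel) + (\<integral>u. (K * G u) *\<^sub>R u \<partial>lborel)"
    by (rule Bochner_Integration.integral_add) (use assms in \<open>auto simp flip: scaleR_scaleR\<close>)
  finally have moment: "(\<integral>x. (p x * noise_density sg (z - x)) *\<^sub>R x \<partial>lborel)
      = (K * (\<integral>u. G u \<partial>lborel)) *\<^sub>R m"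
    using assms odd_moment by (simp flip: scaleR_scaleR)
  show ?thesis
    unfolding MMSE_def mass moment using assms by simp
qed

lemma quadratic_form_complete_square:
  fixes Q :: "real^'n^'n"
  assumes sym: "transpose Q = Q" and "t \<noteq> 0"
  shows "x \<bullet> (Q *v x) + norm (m + t *\<^sub>R (Q *v m) - x)^2 / t
       = (x - m) \<bullet> (Q *v (x - m)) + norm (x - m)^2 / t + (m \<bullet> (Q *v m) + t * norm (Q *v m)^2)"
proof -
  define d where "d = x - m"
  have x: "x = m + d" by (simp add: d_def)
  have "m \<bullet> (Q *v d) = d \<bullet> (Q *v m)"
    using inner_matrix_vector_mult_sym[OF sym, of m d] by (simp add: inner_commute)
  then have quad: "x \<bullet> (Q *v x) = d \<bullet> (Q *v d) + 2 * (d \<bullet> (Q *v m)) + m \<bullet> (Q *v m)"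
    unfolding x by (simp add: matrix_vector_right_distrib inner_add_left inner_add_right)
  have diff: "m + t *\<^sub>R (Q *v m) - x = t *\<^sub>R (Q *v m) - d"
    by (simp add: x)
  have sq: "norm (m + t *\<^sub>R (Q *v m) - x)^2 = t^2 * norm (Q *v m)^2 - 2 * t * (d \<bullet> (Q *v m)) + norm d ^ 2"
    unfolding diff power2_norm_eq_inner
    by (simp add: inner_diff_left inner_diff_right inner_commute power2_eq_square)
  show ?thesis
    unfolding quad sq d_def[symmetric] using assms(2) by (simp add: field_simps power2_eq_square)
qed

lemma gauss_posterior_weight_eq:
  fixes S :: "real^'n^'n" and m :: "real^'n"
  assumes S: "pos_def S" and sg: "0 < sg"
  obtains K where "0 < K" and "\<And>x. gauss_density S x * noise_density sg (m + sg^2 *\<^sub>R (matrix_inv S *v m) - x)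
      = K * exp (- ((x - m) \<bullet> (matrix_inv S *v (x - m)) + norm (x - m)^2 / sg^2) / 2)"
proof -
  define Q where "Q = matrix_inv S"
  have sym: "transpose Q = Q"
    using pos_def_matrix_inv[OF S] by (simp add: Q_def pos_def_def)
  define c where "c = sqrt ((2 * pi) ^ CARD('n) * det S) * sqrt ((2 * pi * sg ^ 2) ^ CARD('n))"
  define K where "K = exp (- (m \<bullet> (Q *v m) + sg^2 * norm (Q *v m)^2) / 2) / c"
  have "0 < K" using pos_def_det_pos[OF S] sg by (simp add: K_def c_def)
  have "gauss_density S x * noise_density sg (m + sg^2 *\<^sub>R (Q *v m) - x)
      = K * exp (- ((x - m) \<bullet> (Q *v (x - m)) + norm (x - m)^2 / sg^2) / 2)" for x
  proof -
    let ?z = "m + sg^2 *\<^sub>R (Q *v m)"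
    have "sg^2 \<noteq> 0" using sg by simp
    note square = quadratic_form_complete_square[OF sym this, of x m]
    have "- (x \<bullet> (Q *v x)) / 2 + - (norm (?z - x) ^ 2 / (2 * sg^2))
        = - (x \<bullet> (Q *v x) + norm (?z - x) ^ 2 / sg^2) / 2"
      by simp
    also have "\<dots> = - (m \<bullet> (Q *v m) + sg^2 * norm (Q *v m)^2) / 2
          + - ((x - m) \<bullet> (Q *v (x - m)) + norm (x - m) ^ 2 / sg^2) / 2"
      unfolding square by argo
    finally have exponent: "- (x \<bullet> (Q *v x)) / 2 + - (norm (?z - x) ^ 2 / (2 * sg^2))
        = - (m \<bullet> (Q *v m) + sg^2 * norm (Q *v m)^2) / 2
          + - ((x - m) \<bullet> (Q *v (x - m)) + norm (x - m) ^ 2 / sg^2) / 2" .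
    have "gauss_density S x * noise_density sg (?z - x)
        = exp (- (x \<bullet> (Q *v x)) / 2 + - (norm (?z - x) ^ 2 / (2 * sg^2))) / c"
      unfolding gauss_density_def noise_density_def c_def Q_def by (simp add: exp_add[symmetric])
    also have "\<dots> = K * exp (- ((x - m) \<bullet> (Q *v (x - m)) + norm (x - m)^2 / sg^2) / 2)"
      unfolding exponent K_def by (simp add: exp_add)
    finally show ?thesis .
  qed
  with \<open>0 < K\<close> show ?thesis
    using that unfolding Q_def by blast
qed

lemma MMSE_gauss_density:
  fixes S :: "real^'n^'n"
  assumes S: "pos_def S" and sg: "0 < sg"
  shows "MMSE (gauss_density S) sg (m + sg^2 *\<^sub>R (matrix_inv S *v m)) = m"
proof -
  define G where "G u = exp (- (u \<bullet> (matrix_inv S *v u) + norm u ^ 2 / sg^2) / 2)" for u :: "real^'n"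
  obtain K where "0 < K"
    and weight: "\<And>x. gauss_density S x * noise_density sg (m + sg^2 *\<^sub>R (matrix_inv S *v m) - x)
      = K * G (x - m)"
    using gauss_posterior_weight_eq[OF S sg, where m = m] unfolding G_def by blast
  have Gm[measurable]: "G \<in> borel_measurable borel"
    unfolding G_def[abs_def]
    by (intro borel_measurable_continuous_onI continuous_intros linear_continuous_on matrix_vector_mul_linear)
      (use sg in auto)
  have "\<bar>G u\<bar> \<le> exp (- (norm u ^ 2) / (2 * sg^2))" for u
    using pos_def_quadratic_form_nonneg[OF pos_def_matrix_inv[OF S], of u] sg
    by (simp add: G_def field_simps)
  note G_int = integrable_if_gaussian_bound[OF sg Gm this]
  have even: "G (- u) = G u" for u
    by (simp add: G_def matrix_vector_mult_scaleR[of _ "-1", simplified])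
  have "0 < (\<integral>u. G u \<partial>lborel)"
    by (rule integral_lborel_pos[OF G_int(1)]) (simp add: G_def)
  then show ?thesis
    by (intro MMSE_eq_center_of_symmetric_weight[OF weight _ Gm G_int even])
      (use \<open>0 < K\<close> in auto)
qed

lemma prox_neg_log_eqI:
  assumes "\<And>x. x \<noteq> P \<Longrightarrow>
      (norm (y - P))^2 / 2 - \<tau> * ln (p P) < (norm (y - x))^2 / 2 - \<tau> * ln (p x)"
  shows "prox_neg_log \<tau> p y = P"
  unfolding prox_neg_log_def
proof (rule the_equality)
  show "\<forall>x. (norm (y - P))^2 / 2 - \<tau> * ln (p P) \<le> (norm (y - x))^2 / 2 - \<tau> * ln (p x)"
    using assms by (metis less_imp_le order_refl)
next
  fix x
  assume "\<forall>x'. (norm (y - x))^2 / 2 - \<tau> * ln (p x) \<le> (norm (y - x'))^2 / 2 - \<tau> * ln (p x')"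
  then show "x = P" using assms[of x] by (meson not_le)
qed

lemma ln_gauss_density:
  fixes S :: "real^'n^'n"
  assumes "pos_def S"
  shows "ln (gauss_density S x)
       = - (x \<bullet> (matrix_inv S *v x)) / 2 - ln (sqrt ((2 * pi) ^ CARD('n) * det S))"
  using pos_def_det_pos[OF assms] by (simp add: gauss_density_def ln_div)

lemma prox_neg_log_gauss_density:
  fixes S :: "real^'n^'n"
  assumes S: "pos_def S" and tau: "0 < \<tau>"
  shows "prox_neg_log \<tau> (gauss_density S) (P + \<tau> *\<^sub>R (matrix_inv S *v P)) = P"
proof (rule prox_neg_log_eqI)
  define Q where "Q = matrix_inv S"
  have "pos_def Q" using pos_def_matrix_inv[OF S] by (simp add: Q_def)
  then have sym: "transpose Q = Q" and psd: "\<And>u. 0 \<le> u \<bullet> (Q *v u)"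
    using pos_def_quadratic_form_nonneg unfolding pos_def_def by blast+
  define c where "c = sqrt ((2 * pi) ^ CARD('n) * det S)"
  define C where "C = P \<bullet> (Q *v P) + \<tau> * norm (Q *v P)^2"
  have objective: "(norm (P + \<tau> *\<^sub>R (Q *v P) - x))^2 / 2 - \<tau> * ln (gauss_density S x)
      = \<tau> / 2 * ((x - P) \<bullet> (Q *v (x - P)) + norm (x - P)^2 / \<tau> + C) + \<tau> * ln c" for x
  proof -
    have "(norm (P + \<tau> *\<^sub>R (Q *v P) - x))^2 / 2 - \<tau> * ln (gauss_density S x)
        = \<tau> / 2 * (x \<bullet> (Q *v x) + (norm (P + \<tau> *\<^sub>R (Q *v P) - x))^2 / \<tau>) + \<tau> * ln c"
      using tau by (simp add: ln_gauss_density[OF S] Q_def c_def field_simps)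
    then show ?thesis
      unfolding quadratic_form_complete_square[OF sym less_imp_neq[OF tau, symmetric]] C_def .
  qed
  fix x assume "x \<noteq> P"
  then have "0 < norm (x - P)^2 / \<tau>" using tau by simp
  then have "\<tau> / 2 * C < \<tau> / 2 * ((x - P) \<bullet> (Q *v (x - P)) + norm (x - P)^2 / \<tau> + C)"
    using tau psd[of "x - P"] by (intro mult_strict_left_mono) auto
  then show "(norm (P + \<tau> *\<^sub>R (matrix_inv S *v P) - P))^2 / 2 - \<tau> * ln (gauss_density S P)
      < (norm (P + \<tau> *\<^sub>R (matrix_inv S *v P) - x))^2 / 2 - \<tau> * ln (gauss_density S x)"
    unfolding Q_def[symmetric] objective by simp
qed

theorem proposition5:
  fixes S :: "real^'n^'n" and \<tau> :: real and y :: "real^'n" and x :: "nat \<Rightarrow> real^'n"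
  assumes "pos_def S"
    and "\<tau> > 0"
    and "x 0 = y"
    and "\<And>k. x (Suc k) =
            (real (k + 1) / real (k + 2)) *\<^sub>R MMSE (gauss_density S) (sqrt (\<tau> / real (k + 1))) (x k)
            + (1 - real (k + 1) / real (k + 2)) *\<^sub>R y"
  shows "\<forall>k. x k - prox_neg_log \<tau> (gauss_density S) y
             = (1 / real (k + 1)) *\<^sub>R (y - prox_neg_log \<tau> (gauss_density S) y)"
proof -
  define Q where "Q = matrix_inv S"
  obtain P where y: "y = P + \<tau> *\<^sub>R (Q *v P)"
    using id_plus_pos_def_surj[OF pos_def_matrix_inv[OF assms(1)], of \<tau> y] assms(2)
    unfolding Q_def by (metis less_imp_le)
  have prox: "prox_neg_log \<tau> (gauss_density S) y = P"
    unfolding y Q_def by (rule prox_neg_log_gauss_density[OF assms(1,2)])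
  have iterate: "x k = P + (\<tau> / real (k + 1)) *\<^sub>R (Q *v P)" for k
  proof (induction k)
    case 0
    then show ?case using assms(3) y by simp
  next
    case (Suc k)
    have "MMSE (gauss_density S) (sqrt (\<tau> / real (k + 1))) (x k) = P"
      using MMSE_gauss_density[OF assms(1), of "sqrt (\<tau> / real (k + 1))" P] assms(2)
      by (simp add: Suc Q_def)
    then have "x (Suc k) = P + ((1 - real (k + 1) / real (k + 2)) * \<tau>) *\<^sub>R (Q *v P)"
      by (simp add: assms(4) y algebra_simps)
    also have "(1 - real (k + 1) / real (k + 2)) * \<tau> = \<tau> / real (Suc k + 1)"
      by (simp add: field_simps)
    finally show ?case .
  qed
  show ?thesis
    unfolding prox by (simp add: iterate y)
qed

end
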